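(* Let $(c_i)_{i\ge 1}$ be a sequence of costs with $c_i\in(0,\infty)$, and set $a_i=\frac{c_i}{1+c_i}$. For each $n\ge 2$ consider the one-shot random access game $G(n,\mathbf{c}_n)$ with $\mathbf{c}_n=(c_1,\dots,c_n)$ (defined in the context), and assume that for every $n\ge 2$ this game has a fully-mixed Nash equilibrium (FMNE). Let $p_{i,n}$ denote the transmission probability of transmitter $i$ at this FMNE, and let $S_n=\sum_{i=1}^n X_i^{(n)}$, where $X_1^{(n)},\dots,X_n^{(n)}$ are independent $\{0,1\}$-valued random variables with $\mathbb{P}\{X_i^{(n)}=1\}=p_{i,n}$ (the actions of the transmitters at the FMNE). Then: (i) $S_n$ converges in distribution as $n\to\infty$ if and only if $\lim_{n\to\infty}\sum_{i=1}^n p_{i,n}$ exists and lies in $(0,\infty)$; (ii) moreover, for any $\epsilon>0$ there exist a Poisson random variable $Po(\lambda)$ and finitely many Bernoulli random variables $Bern(p_1),\dots,Bern(p_K)$, all mutually independent, such that $$\limsup_{n\to\infty} d_V\Big(S_n,\ Po(\lambda)+\sum_{k=1}^K Bern(p_k)\Big)\le \epsilon .$$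
   Context: The game $G(n,\mathbf{c})$, for $\mathbf{c}=(c_1,\dots,c_n)\in(0,\infty)^n$, is the strategic game with player set $\{1,\dots,n\}$ (transmitters), action set $\{0,1\}$ for each player ($1$ = transmit, $0$ = back off), and utilities: $u_i(\mathbf{a})=0$ if $a_i=0$; $u_i(\mathbf{a})=1$ if $a_i=1$ and $\sum_j a_j=1$; $u_i(\mathbf{a})=-c_i$ if $a_i=1$ and $\sum_j a_j\ge 2$. Players use independent mixed strategies (transmission probabilities). A fully-mixed Nash equilibrium is a mixed-strategy Nash equilibrium in which every player transmits with probability strictly in $(0,1)$. (Equivalently: the FMNE of $G(n,\mathbf{c}_n)$ exists iff $a_i>\big(\prod_{j=1}^n a_j\big)^{1/(n-1)}$ for all $1\le i\le n$, and then it is unique with $p_{i,n}=1-a_i^{-1}\big(\prod_{j=1}^n a_j\big)^{1/(n-1)}$.) $Po(\lambda)$ denotes a Poisson random variable with mean $\lambda$ and $Bern(p)$ a $\{0,1\}$-valued Bernoulli random variable with mean $p$; a sum of independent random variables inside $d_V$ refers to the convolution of their distributions. For distributions $\mu,\nu$ on $\mathbb{Z}$, the variational distance is $d_V(\mu,\nu)=\sum_{z\in\mathbb{Z}}|\mu(z)-\nu(z)|$, and $d_V(X,Y)$ means the distance between the distributions of $X$ and $Y$. *)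

theory Defs
  imports "HOL-Probability.Probability"
begin

text \<open>Players are 1..n; action profiles assign 0 (back off) or 1 (transmit) to each player.\<close>

definition profiles :: "nat \<Rightarrow> (nat \<Rightarrow> nat) set" where
  "profiles n = Pi\<^sub>E {1..n} (\<lambda>_. {0, 1})"

definition utility :: "(nat \<Rightarrow> real) \<Rightarrow> nat \<Rightarrow> nat \<Rightarrow> (nat \<Rightarrow> nat) \<Rightarrow> real" where
  "utility c n i a =
     (if a i = 0 then 0
      else if (\<Sum>j\<in>{1..n}. a j) = 1 then 1
      else - c i)"

definition profile_prob :: "nat \<Rightarrow> (nat \<Rightarrow> real) \<Rightarrow> (nat \<Rightarrow> nat) \<Rightarrow> real" where
  "profile_prob n p a = (\<Prod>j\<in>{1..n}. if a j = 1 then p j else 1 - p j)"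

definition exp_utility :: "(nat \<Rightarrow> real) \<Rightarrow> nat \<Rightarrow> (nat \<Rightarrow> real) \<Rightarrow> nat \<Rightarrow> real" where
  "exp_utility c n p i = (\<Sum>a\<in>profiles n. profile_prob n p a * utility c n i a)"

definition mixed_NE :: "(nat \<Rightarrow> real) \<Rightarrow> nat \<Rightarrow> (nat \<Rightarrow> real) \<Rightarrow> bool" where
  "mixed_NE c n p \<longleftrightarrow>
     (\<forall>i\<in>{1..n}. 0 \<le> p i \<and> p i \<le> 1) \<and>
     (\<forall>i\<in>{1..n}. \<forall>q. 0 \<le> q \<and> q \<le> 1 \<longrightarrow> exp_utility c n (p(i := q)) i \<le> exp_utility c n p i)"

definition FMNE :: "(nat \<Rightarrow> real) \<Rightarrow> nat \<Rightarrow> (nat \<Rightarrow> real) \<Rightarrow> bool" where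
  "FMNE c n p \<longleftrightarrow> mixed_NE c n p \<and> (\<forall>i\<in>{1..n}. 0 < p i \<and> p i < 1)"

fun bern_sum_pmf :: "(nat \<Rightarrow> real) \<Rightarrow> nat \<Rightarrow> nat pmf" where
  "bern_sum_pmf p 0 = return_pmf 0"
| "bern_sum_pmf p (Suc k) =
     bind_pmf (bern_sum_pmf p k) (\<lambda>s. map_pmf (\<lambda>b. s + (if b then 1 else 0)) (bernoulli_pmf (p (Suc k))))"

definition conv_pmf :: "nat pmf \<Rightarrow> nat pmf \<Rightarrow> nat pmf" where
  "conv_pmf M N = bind_pmf M (\<lambda>x. map_pmf (\<lambda>y. x + y) N)"

text \<open>Variational distance (sum of absolute differences, no factor 1/2).\<close>
definition dV :: "nat pmf \<Rightarrow> nat pmf \<Rightarrow> real" where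
  "dV M N = (\<Sum>z. \<bar>pmf M z - pmf N z\<bar>)"

end

theory Submission
  imports Defs
begin

text \<open>
  Indifference of each player at a fully mixed equilibrium gives
  \<open>\<Prod>j\<noteq>i. 1 - p n j = a i\<close>, i.e. \<open>- ln (1 - p n i) = L n - ell i\<close> with \<open>ell i = - ln (a i)\<close>
  and \<open>(n - 1) * L n = (\<Sum>i\<le>n. ell i)\<close>. Hence \<open>L n\<close> decreases to a limit \<open>\<mu> > 0\<close> and
  \<open>p n i = 1 - exp (- (y i + \<delta> n))\<close>, where \<open>y i = \<mu> - ell i \<ge> 0\<close> is summable and
  \<open>\<delta> n = L n - \<mu>\<close> satisfies \<open>n * \<delta> n \<longlonglongrightarrow> \<mu> - (\<Sum>i. y i)\<close>. Consequently \<open>\<Sum>i\<le>n. p n i\<close>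
  converges to \<open>(\<Sum>i. 1 - exp (- y i)) + \<mu> - (\<Sum>i. y i) > 0\<close>. As for the distribution, the first
  \<open>K\<close> players converge to independent \<open>Bern (1 - exp (- y i))\<close>, while all later players have
  small intensities, so by Le Cam's inequality their sum is close to a Poisson law of rate
  \<open>\<mu> - (\<Sum>i\<le>K. y i)\<close>. Large \<open>K\<close> gives approximations of \<open>S n\<close> in variational distance of any
  precision, which forces the point probabilities of \<open>S n\<close> to converge to a distribution.
\<close>

section \<open>Expected utility and the equilibrium condition\<close>

lemma utility_on_profile:
  assumes a: "a \<in> profiles n" and i: "i \<in> {1..n}"
  shows "utility c n i a =
    (if a i = 1 then (if \<forall>j\<in>{1..n}-{i}. a j = 0 then 1 else - c i) else 0)"
proof -
  have a01: "a j = 0 \<or> a j = 1" if "j \<in> {1..n}" for j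
    using a that unfolding profiles_def by auto
  have "(\<Sum>j\<in>{1..n}. a j) = a i + (\<Sum>j\<in>{1..n}-{i}. a j)"
    using i by (simp add: sum.remove)
  then show ?thesis
    using a01[OF i] unfolding utility_def by auto
qed

lemma sum_profiles_prod:
  fixes f :: "nat \<Rightarrow> nat \<Rightarrow> 'a::comm_semiring_1"
  shows "(\<Sum>a\<in>profiles n. \<Prod>j\<in>{1..n}. f j (a j)) = (\<Prod>j\<in>{1..n}. f j 0 + f j 1)"
proof -
  have "(\<Sum>a\<in>profiles n. \<Prod>j\<in>{1..n}. f j (a j)) = (\<Prod>j\<in>{1..n}. \<Sum>v\<in>{0,1}. f j v)"
    unfolding profiles_def by (rule prod_sum_PiE[symmetric]) auto
  then show ?thesis by simp
qed

text \<open>Summed over profiles, the product weights below give the probabilities that \<open>i\<close> is the only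
  transmitter, resp. that \<open>i\<close> transmits. Since a lone transmitter earns \<open>1 + c i\<close> more than a
  colliding one, the payoff of \<open>i\<close> is \<open>1 + c i\<close> times the first indicator minus \<open>c i\<close> times the
  second.\<close>

definition alone_weight :: "(nat \<Rightarrow> real) \<Rightarrow> nat \<Rightarrow> nat \<Rightarrow> nat \<Rightarrow> real" where
  "alone_weight p i j v = (if j = i then (if v = 1 then p j else 0) else (if v = 1 then 0 else 1 - p j))"

definition transmit_weight :: "(nat \<Rightarrow> real) \<Rightarrow> nat \<Rightarrow> nat \<Rightarrow> nat \<Rightarrow> real" where
  "transmit_weight p i j v = (if j = i then (if v = 1 then p j else 0) else (if v = 1 then p j else 1 - p j))"

lemma profile_prob_mult_utility:
  assumes a: "a \<in> profiles n" and i: "i \<in> {1..n}"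
  shows "profile_prob n p a * utility c n i a =
    (1 + c i) * (\<Prod>j\<in>{1..n}. alone_weight p i j (a j)) - c i * (\<Prod>j\<in>{1..n}. transmit_weight p i j (a j))"
proof (cases "a i = 1")
  case False
  have "(\<Prod>j\<in>{1..n}. alone_weight p i j (a j)) = 0" "(\<Prod>j\<in>{1..n}. transmit_weight p i j (a j)) = 0"
    using i False by (auto simp: alone_weight_def transmit_weight_def intro!: prod_zero bexI[of _ i])
  then show ?thesis using False utility_on_profile[OF a i, of c] by (simp only:) simp
next
  case True
  have a01: "a j = 0 \<or> a j = 1" if "j \<in> {1..n}" for j
    using a that unfolding profiles_def by auto
  have t: "(\<Prod>j\<in>{1..n}. transmit_weight p i j (a j)) = profile_prob n p a"
    unfolding profile_prob_def using True by (intro prod.cong) (auto simp: transmit_weight_def)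
  show ?thesis
  proof (cases "\<forall>j\<in>{1..n}-{i}. a j = 0")
    case True2: True
    have "(\<Prod>j\<in>{1..n}. alone_weight p i j (a j)) = profile_prob n p a"
      unfolding profile_prob_def using True True2 by (intro prod.cong) (auto simp: alone_weight_def)
    then show ?thesis
      using t True True2 utility_on_profile[OF a i, of c] by (simp add: algebra_simps)
  next
    case False
    then obtain j where j: "j \<in> {1..n}-{i}" "a j = 1" using a01 by blast
    then have z: "(\<Prod>j\<in>{1..n}. alone_weight p i j (a j)) = 0"
      by (intro prod_zero) (auto simp: alone_weight_def intro!: bexI[of _ j])
    have "\<not> (\<forall>j\<in>{1..n}-{i}. a j = 0)" using j by force
    then have "utility c n i a = - c i"
      using True utility_on_profile[OF a i, of c] by (simp only: if_True if_False simp_thms)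
    then show ?thesis unfolding z t by simp
  qed
qed

lemma sum_profiles_alone_weight:
  assumes "i \<in> {1..n}"
  shows "(\<Sum>a\<in>profiles n. \<Prod>j\<in>{1..n}. alone_weight p i j (a j)) = p i * (\<Prod>j\<in>{1..n}-{i}. 1 - p j)"
  unfolding sum_profiles_prod using assms
  by (simp add: prod.remove, intro arg_cong2[where f="(*)"] prod.cong) (auto simp: alone_weight_def)

lemma sum_profiles_transmit_weight:
  assumes "i \<in> {1..n}"
  shows "(\<Sum>a\<in>profiles n. \<Prod>j\<in>{1..n}. transmit_weight p i j (a j)) = p i"
  unfolding sum_profiles_prod using assms by (simp add: prod.remove transmit_weight_def)

lemma exp_utility_eq:
  assumes i: "i \<in> {1..n}"
  shows "exp_utility c n p i = p i * ((1 + c i) * (\<Prod>j\<in>{1..n}-{i}. 1 - p j) - c i)"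
proof -
  have "exp_utility c n p i = (\<Sum>a\<in>profiles n. (1 + c i) * (\<Prod>j\<in>{1..n}. alone_weight p i j (a j))
      - c i * (\<Prod>j\<in>{1..n}. transmit_weight p i j (a j)))"
    unfolding exp_utility_def by (rule sum.cong) (auto simp: profile_prob_mult_utility[OF _ i])
  also have "\<dots> = (1 + c i) * (p i * (\<Prod>j\<in>{1..n}-{i}. 1 - p j)) - c i * p i"
    by (simp only: sum_subtractf sum_distrib_left[symmetric]
        sum_profiles_alone_weight[OF i] sum_profiles_transmit_weight[OF i])
  finally show ?thesis by (simp add: algebra_simps)
qed

text \<open>Indifference of a fully mixing player: the expected utility is linear in its own
  probability, so it is maximised at an interior point only if the slope vanishes.\<close>

lemma FMNE_prod_one_minus:
  assumes "FMNE c n p" and i: "i \<in> {1..n}" and ci: "0 < c i"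
  shows "(\<Prod>j\<in>{1..n}-{i}. 1 - p j) = c i / (1 + c i)"
proof -
  from assms have p: "0 < p i" "p i < 1"
    and ne: "\<And>q. 0 \<le> q \<Longrightarrow> q \<le> 1 \<Longrightarrow> exp_utility c n (p(i := q)) i \<le> exp_utility c n p i"
    unfolding FMNE_def mixed_NE_def by auto
  define slope where "slope = (1 + c i) * (\<Prod>j\<in>{1..n}-{i}. 1 - p j) - c i"
  have deviate: "exp_utility c n (p(i := q)) i = q * slope" for q
  proof -
    have "(\<Prod>j\<in>{1..n}-{i}. 1 - (p(i := q)) j) = (\<Prod>j\<in>{1..n}-{i}. 1 - p j)"
      by (intro prod.cong) auto
    then show ?thesis unfolding exp_utility_eq[OF i] slope_def by simp
  qed
  have stay: "exp_utility c n p i = p i * slope"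
    unfolding exp_utility_eq[OF i] slope_def by simp
  have "0 \<le> p i * slope" using ne[of 0] deviate[of 0] stay by simp
  then have "0 \<le> slope" using p by (simp add: zero_le_mult_iff)
  moreover have "slope \<le> p i * slope" using ne[of 1] deviate[of 1] stay by simp
  then have "slope \<le> 0" using p by (smt (verit) mult_le_cancel_right1)
  ultimately have "slope = 0" by simp
  then show ?thesis unfolding slope_def using ci by (simp add: field_simps)
qed

lemma one_minus_exp_neg_le: "1 - exp (- x) \<le> (x :: real)"
  using exp_ge_add_one_self[of "- x"] by simp

lemma one_minus_exp_neg_ge:
  fixes x :: real assumes "0 \<le> x" shows "x - x\<^sup>2 \<le> 1 - exp (- x)"
proof -
  have "exp (- x) = 1 / exp x" by (simp add: exp_minus field_simps)
  also have "\<dots> \<le> 1 / (1 + x)" using exp_ge_add_one_self[of x] assms by (intro divide_left_mono) auto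
  also have "\<dots> \<le> 1 - x + x\<^sup>2" using assms by (simp add: field_simps power2_eq_square)
  finally show ?thesis by simp
qed

lemma one_minus_prod_le_sum:
  assumes "finite A" "\<And>i. i \<in> A \<Longrightarrow> 0 \<le> p i \<and> p i \<le> (1::real)"
  shows "1 - (\<Prod>i\<in>A. 1 - p i) \<le> (\<Sum>i\<in>A. p i)"
  using assms
proof (induction A rule: finite_induct)
  case (insert x F)
  have "(\<Prod>i\<in>F. 1 - p i) \<le> 1" using insert.prems by (intro prod_le_1) auto
  then have "p x * (\<Prod>i\<in>F. 1 - p i) \<le> p x" using insert.prems by (simp add: mult_left_le)
  then show ?case using insert by (simp add: algebra_simps)
qed simp

lemma sum_atLeast1_split:
  fixes f :: "nat \<Rightarrow> 'a::comm_monoid_add"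
  assumes "K \<le> n"
  shows "(\<Sum>i=1..n. f i) = (\<Sum>i=1..K. f i) + (\<Sum>i=1..n-K. f (K + i))"
proof -
  have "{1..n} = {1..K} \<union> {K+1..n}" using assms by auto
  then have "(\<Sum>i=1..n. f i) = (\<Sum>i=1..K. f i) + (\<Sum>i=K+1..n. f i)"
    by (simp add: sum.union_disjoint)
  also have "(\<Sum>i=K+1..n. f i) = (\<Sum>i=1..n-K. f (K + i))"
    using sum.shift_bounds_cl_nat_ivl[of f 1 K "n - K"] assms by (simp add: add.commute)
  finally show ?thesis .
qed

section \<open>Convolution and variational distance of distributions on \<open>nat\<close>\<close>

lemma conv_pmf_altdef: "conv_pmf M N = bind_pmf M (\<lambda>x. bind_pmf N (\<lambda>y. return_pmf (x + y)))"
  unfolding conv_pmf_def map_pmf_def by (simp add: comp_def)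

lemma conv_pmf_assoc: "conv_pmf (conv_pmf A B) C = conv_pmf A (conv_pmf B C)"
  unfolding conv_pmf_altdef by (simp add: bind_assoc_pmf bind_return_pmf add.assoc)

lemma conv_pmf_commute: "conv_pmf A B = conv_pmf B A"
  unfolding conv_pmf_altdef by (subst bind_commute_pmf) (simp add: add.commute)

lemma conv_pmf_return_0 [simp]: "conv_pmf M (return_pmf 0) = M" "conv_pmf (return_pmf 0) M = M"
  unfolding conv_pmf_altdef by (simp_all add: bind_return_pmf bind_return_pmf')

lemma pmf_map_add:
  fixes B :: "nat pmf"
  shows "pmf (map_pmf (\<lambda>y. x + y) B) z = (if x \<le> z then pmf B (z - x) else 0)"
proof (cases "x \<le> z")
  case True
  have "pmf (map_pmf (\<lambda>y. x + y) B) (x + (z - x)) = pmf B (z - x)"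
    by (rule pmf_map_inj') (simp add: inj_def)
  then show ?thesis using True by simp
qed (subst pmf_map_outside, auto)

lemma pmf_conv_pmf: "pmf (conv_pmf A B) z = (\<Sum>x\<le>z. pmf A x * pmf B (z - x))"
  unfolding conv_pmf_def pmf_bind pmf_map_add
  by (subst integral_measure_pmf_real[where A="{..z}"])
     (auto split: if_splits simp: mult.commute intro!: sum.cong)

lemma summable_pmf_nat: "summable (pmf (M :: nat pmf))"
  using pmf_abs_summable[of M UNIV] unfolding abs_summable_on_nat_iff' by simp

lemma suminf_pmf_nat: "(\<Sum>n. pmf (M :: nat pmf) n) = 1"
  using infsetsum_nat'[OF pmf_abs_summable[of M UNIV]] infsetsum_pmf_eq_1[of M UNIV] by simp

lemma suminf_pmf_nat_shift: "(\<Sum>n. pmf (N :: nat pmf) (n + k)) = 1 - (\<Sum>i<k. pmf N i)"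
  using suminf_split_initial_segment[OF summable_pmf_nat[of N], of k] suminf_pmf_nat[of N] by simp

lemma sum_pmf_nat_le_1: "(\<Sum>k<n. pmf (M :: nat pmf) k) \<le> 1"
  using sum_le_suminf[OF summable_pmf_nat[of M], of "{..<n}"] suminf_pmf_nat[of M] by simp

lemma summable_dV: "summable (\<lambda>z. \<bar>pmf M z - pmf N z\<bar>)"
  by (rule summable_comparison_test[OF _ summable_add[OF summable_pmf_nat[of M] summable_pmf_nat[of N]]])
     (auto simp: abs_le_iff)

lemma dV_commute: "dV M N = dV N M"
  unfolding dV_def by (simp add: abs_minus_commute)

lemma dV_self [simp]: "dV M M = 0"
  unfolding dV_def by simp

lemma dV_triangle: "dV M P \<le> dV M N + dV N P"
proof -
  have "dV M P \<le> (\<Sum>z. \<bar>pmf M z - pmf N z\<bar> + \<bar>pmf N z - pmf P z\<bar>)"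
    unfolding dV_def by (intro suminf_le summable_dV summable_add) auto
  also have "\<dots> = dV M N + dV N P"
    unfolding dV_def by (intro suminf_add[symmetric] summable_dV)
  finally show ?thesis .
qed

lemma dV_split: "dV M N = (\<Sum>n. \<bar>pmf M (n + k) - pmf N (n + k)\<bar>) + (\<Sum>i<k. \<bar>pmf M i - pmf N i\<bar>)"
  unfolding dV_def by (rule suminf_split_initial_segment[OF summable_dV])

lemma sum_pmf_diff_le_dV:
  assumes "finite I"
  shows "\<bar>(\<Sum>z\<in>I. pmf M z) - (\<Sum>z\<in>I. pmf N z)\<bar> \<le> dV M N"
proof -
  have "\<bar>(\<Sum>z\<in>I. pmf M z) - (\<Sum>z\<in>I. pmf N z)\<bar> \<le> (\<Sum>z\<in>I. \<bar>pmf M z - pmf N z\<bar>)"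
    by (simp only: sum_subtractf[symmetric] sum_abs)
  also have "\<dots> \<le> dV M N"
    unfolding dV_def by (rule sum_le_suminf[OF summable_dV assms]) auto
  finally show ?thesis .
qed

lemma pmf_diff_le_dV: "\<bar>pmf M z - pmf N z\<bar> \<le> dV M N"
  using sum_pmf_diff_le_dV[of "{z}" M N] by simp

text \<open>The pointwise bound on the convolution difference is a Cauchy product of two absolutely
  summable series, whose sum is \<open>dV A A' * 1\<close>.\<close>

lemma dV_conv_pmf_left: "dV (conv_pmf A B) (conv_pmf A' B) \<le> dV A A'"
proof -
  define a where "a x = \<bar>pmf A x - pmf A' x\<bar>" for x
  have sa: "summable (\<lambda>k. norm (a k))" unfolding a_def using summable_dV by simp
  have sb: "summable (\<lambda>k. norm (pmf B k))" using summable_pmf_nat by simp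
  have pointwise: "\<bar>pmf (conv_pmf A B) z - pmf (conv_pmf A' B) z\<bar> \<le> (\<Sum>i\<le>z. a i * pmf B (z - i))" for z
  proof -
    have "\<bar>pmf (conv_pmf A B) z - pmf (conv_pmf A' B) z\<bar>
        = \<bar>\<Sum>i\<le>z. (pmf A i - pmf A' i) * pmf B (z - i)\<bar>"
      unfolding pmf_conv_pmf by (simp add: sum_subtractf left_diff_distrib)
    also have "\<dots> \<le> (\<Sum>i\<le>z. \<bar>(pmf A i - pmf A' i) * pmf B (z - i)\<bar>)" by (rule sum_abs)
    also have "\<dots> = (\<Sum>i\<le>z. a i * pmf B (z - i))" by (simp add: a_def abs_mult)
    finally show ?thesis .
  qed
  have "dV (conv_pmf A B) (conv_pmf A' B) \<le> (\<Sum>z. \<Sum>i\<le>z. a i * pmf B (z - i))"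
    unfolding dV_def by (intro suminf_le pointwise summable_dV summable_Cauchy_product[OF sa sb])
  also have "\<dots> = (\<Sum>k. a k) * (\<Sum>k. pmf B k)" by (rule Cauchy_product[OF sa sb, symmetric])
  also have "\<dots> = dV A A'" unfolding a_def dV_def suminf_pmf_nat by simp
  finally show ?thesis .
qed

lemma dV_conv_pmf: "dV (conv_pmf A B) (conv_pmf A' B') \<le> dV A A' + dV B B'"
proof -
  have "dV (conv_pmf A' B) (conv_pmf A' B') \<le> dV B B'"
    using dV_conv_pmf_left[of B A' B'] by (metis conv_pmf_commute)
  then show ?thesis
    using dV_triangle[of "conv_pmf A B" "conv_pmf A' B'" "conv_pmf A' B"] dV_conv_pmf_left[of A B A']
    by linarith
qed

lemma dV_return_0: "dV (return_pmf 0) N = 2 * (1 - pmf N 0)"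
proof -
  have "(\<Sum>n. \<bar>pmf (return_pmf 0) (n + 1) - pmf N (n + 1)\<bar>) = 1 - pmf N 0"
    using suminf_pmf_nat_shift[of N 1] by simp
  moreover have "(\<Sum>i<1. \<bar>pmf (return_pmf 0) i - pmf N i\<bar>) = 1 - pmf N 0"
    using pmf_le_1[of N 0] by (simp add: pmf_return)
  ultimately show ?thesis using dV_split[of "return_pmf 0" N 1] by simp
qed

lemma dV_conv_pmf_self: "dV M (conv_pmf N M) \<le> 2 * (1 - pmf N 0)"
  using dV_conv_pmf_left[of "return_pmf 0" M N] by (simp add: dV_return_0)

definition bernoulli_nat_pmf :: "real \<Rightarrow> nat pmf" where
  "bernoulli_nat_pmf q = map_pmf (\<lambda>b. if b then 1 else 0) (bernoulli_pmf q)"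

lemma bern_sum_pmf_Suc_conv:
  "bern_sum_pmf p (Suc k) = conv_pmf (bern_sum_pmf p k) (bernoulli_nat_pmf (p (Suc k)))"
  by (simp add: conv_pmf_def bernoulli_nat_pmf_def map_pmf_comp)

lemma pmf_bernoulli_nat:
  assumes "0 \<le> q" "q \<le> 1"
  shows "pmf (bernoulli_nat_pmf q) k = (if k = 0 then 1 - q else if k = 1 then q else 0)"
proof -
  have "pmf (bernoulli_nat_pmf q) k = measure (measure_pmf (bernoulli_pmf q)) {b. (if b then 1 else 0) = k}"
    unfolding bernoulli_nat_pmf_def pmf_map by (simp add: vimage_def)
  moreover have "{b. (if b then 1 else 0) = k} = (if k = 0 then {False} else if k = 1 then {True} else {})"
    by auto
  ultimately show ?thesis using assms by (simp add: measure_pmf_single)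
qed

lemma dV_bernoulli_nat:
  assumes "0 \<le> p" "p \<le> 1" "0 \<le> q" "q \<le> 1"
  shows "dV (bernoulli_nat_pmf p) (bernoulli_nat_pmf q) = 2 * \<bar>p - q\<bar>"
proof -
  have "dV (bernoulli_nat_pmf p) (bernoulli_nat_pmf q)
      = (\<Sum>z\<in>{0,1}. \<bar>pmf (bernoulli_nat_pmf p) z - pmf (bernoulli_nat_pmf q) z\<bar>)"
    unfolding dV_def by (rule suminf_finite) (auto simp: pmf_bernoulli_nat assms)
  then show ?thesis using assms by (simp add: pmf_bernoulli_nat abs_minus_commute)
qed

lemma conv_poisson_pmf:
  assumes a: "0 < a" and b: "0 < b"
  shows "conv_pmf (poisson_pmf a) (poisson_pmf b) = poisson_pmf (a + b)"
proof (rule pmf_eqI)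
  fix z
  have "pmf (conv_pmf (poisson_pmf a) (poisson_pmf b)) z =
        (\<Sum>x\<le>z. a ^ x / fact x * exp (- a) * (b ^ (z - x) / fact (z - x) * exp (- b)))"
    unfolding pmf_conv_pmf using a b by simp
  also have "\<dots> = (\<Sum>x\<le>z. (exp (- (a + b)) / fact z) * (of_nat (z choose x) * a ^ x * b ^ (z - x)))"
    by (intro sum.cong) (auto simp: binomial_fact field_simps mult_exp_exp)
  also have "\<dots> = (exp (- (a + b)) / fact z) * (a + b) ^ z"
    unfolding sum_distrib_left[symmetric] binomial_ring by (rule refl)
  also have "\<dots> = pmf (poisson_pmf (a + b)) z" using a b by simp
  finally show "pmf (conv_pmf (poisson_pmf a) (poisson_pmf b)) z = pmf (poisson_pmf (a + b)) z" .
qed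

lemma dV_poisson:
  assumes "0 < a" "0 < b"
  shows "dV (poisson_pmf a) (poisson_pmf b) \<le> 2 * \<bar>a - b\<bar>"
proof -
  have le: "dV (poisson_pmf a) (poisson_pmf b) \<le> 2 * (b - a)" if "0 < a" "a < b" for a b :: real
  proof -
    have "dV (poisson_pmf a) (poisson_pmf b) = dV (poisson_pmf a) (conv_pmf (poisson_pmf (b - a)) (poisson_pmf a))"
      using conv_poisson_pmf[of "b - a" a] that by simp
    also have "\<dots> \<le> 2 * (1 - exp (- (b - a)))"
      using dV_conv_pmf_self[of "poisson_pmf a" "poisson_pmf (b - a)"] that by simp
    also have "\<dots> \<le> 2 * (b - a)" using one_minus_exp_neg_le[of "b - a"] by simp
    finally show ?thesis .
  qed
  show ?thesis
    using le[of a b] le[of b a] assms dV_commute[of "poisson_pmf a"] by (cases a b rule: linorder_cases) auto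
qed

lemma dV_bernoulli_nat_poisson:
  assumes x: "0 < x"
  shows "dV (bernoulli_nat_pmf (1 - exp (- x))) (poisson_pmf x) \<le> 2 * x\<^sup>2"
proof -
  have q: "0 \<le> 1 - exp (- x)" "1 - exp (- x) \<le> 1" using x by auto
  define r where "r = 1 - exp (- x) - x * exp (- x)"
  have "0 \<le> r"
    using mult_right_mono[OF exp_ge_add_one_self[of x], of "exp (- x)"]
    unfolding r_def by (simp add: exp_minus_inverse algebra_simps)
  have "r \<le> x * (1 - exp (- x))"
    unfolding r_def using one_minus_exp_neg_le[of x] by (simp add: algebra_simps)
  also have "\<dots> \<le> x\<^sup>2"
    using one_minus_exp_neg_le[of x] x by (simp add: power2_eq_square mult_left_mono)
  finally have "r \<le> x\<^sup>2" .
  have "dV (bernoulli_nat_pmf (1 - exp (- x))) (poisson_pmf x) =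
    (\<Sum>n. \<bar>pmf (bernoulli_nat_pmf (1 - exp (- x))) (n + 2) - pmf (poisson_pmf x) (n + 2)\<bar>) +
    (\<Sum>i<2. \<bar>pmf (bernoulli_nat_pmf (1 - exp (- x))) i - pmf (poisson_pmf x) i\<bar>)"
    by (rule dV_split)
  also have "(\<lambda>n. \<bar>pmf (bernoulli_nat_pmf (1 - exp (- x))) (n + 2) - pmf (poisson_pmf x) (n + 2)\<bar>)
      = (\<lambda>n. pmf (poisson_pmf x) (n + 2))"
    using q by (auto simp: pmf_bernoulli_nat simp del: pmf_poisson)
  also have "(\<Sum>n. pmf (poisson_pmf x) (n + 2)) = r"
    unfolding suminf_pmf_nat_shift using x by (simp add: r_def numeral_2_eq_2)
  also have "(\<Sum>i<2. \<bar>pmf (bernoulli_nat_pmf (1 - exp (- x))) i - pmf (poisson_pmf x) i\<bar>) = r"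
    using x q \<open>0 \<le> r\<close> by (simp add: pmf_bernoulli_nat numeral_2_eq_2 r_def abs_minus_commute)
  finally show ?thesis using \<open>r \<le> x\<^sup>2\<close> by simp
qed

lemma bern_sum_pmf_cong:
  "(\<And>i. i \<in> {1..m} \<Longrightarrow> p i = q i) \<Longrightarrow> bern_sum_pmf p m = bern_sum_pmf q m"
  by (induction m) auto

lemma bern_sum_pmf_split:
  assumes "K \<le> n"
  shows "bern_sum_pmf p n = conv_pmf (bern_sum_pmf p K) (bern_sum_pmf (\<lambda>i. p (K + i)) (n - K))"
  using assms
proof (induction n rule: dec_induct)
  case (step n)
  then have "bern_sum_pmf (\<lambda>i. p (K + i)) (Suc n - K) =
      conv_pmf (bern_sum_pmf (\<lambda>i. p (K + i)) (n - K)) (bernoulli_nat_pmf (p (Suc n)))"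
    by (simp add: Suc_diff_le bern_sum_pmf_Suc_conv del: bern_sum_pmf.simps)
  then show ?case by (simp only: bern_sum_pmf_Suc_conv step.IH conv_pmf_assoc)
qed simp

lemma dV_bern_sum_pmf:
  assumes "\<And>i. i \<in> {1..K} \<Longrightarrow> 0 \<le> p i \<and> p i \<le> 1" "\<And>i. i \<in> {1..K} \<Longrightarrow> 0 \<le> q i \<and> q i \<le> 1"
  shows "dV (bern_sum_pmf p K) (bern_sum_pmf q K) \<le> 2 * (\<Sum>i=1..K. \<bar>p i - q i\<bar>)"
  using assms
proof (induction K)
  case (Suc K)
  have "dV (bern_sum_pmf p (Suc K)) (bern_sum_pmf q (Suc K)) \<le>
        dV (bern_sum_pmf p K) (bern_sum_pmf q K) + dV (bernoulli_nat_pmf (p (Suc K))) (bernoulli_nat_pmf (q (Suc K)))"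
    unfolding bern_sum_pmf_Suc_conv by (rule dV_conv_pmf)
  also have "dV (bernoulli_nat_pmf (p (Suc K))) (bernoulli_nat_pmf (q (Suc K))) = 2 * \<bar>p (Suc K) - q (Suc K)\<bar>"
    using Suc.prems[of "Suc K"] by (intro dV_bernoulli_nat) auto
  also have "dV (bern_sum_pmf p K) (bern_sum_pmf q K) \<le> 2 * (\<Sum>i=1..K. \<bar>p i - q i\<bar>)"
    using Suc.prems by (intro Suc.IH) auto
  finally show ?case by (simp add: algebra_simps)
qed simp

lemma dV_conv_bern_sum_poisson:
  assumes a: "0 < a" and x: "\<And>i. i \<in> {1..m} \<Longrightarrow> 0 < x i"
  shows "dV (conv_pmf (poisson_pmf a) (bern_sum_pmf (\<lambda>i. 1 - exp (- x i)) m))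
            (poisson_pmf (a + (\<Sum>i=1..m. x i))) \<le> 2 * (\<Sum>i=1..m. (x i)\<^sup>2)"
  using x
proof (induction m)
  case (Suc m)
  define s where "s = a + (\<Sum>i=1..m. x i)"
  have "0 \<le> (\<Sum>i=1..m. x i)" using Suc.prems by (intro sum_nonneg) (auto intro: less_imp_le)
  then have s: "0 < s" unfolding s_def using a by simp
  have xm: "0 < x (Suc m)" using Suc.prems by simp
  have "poisson_pmf (a + (\<Sum>i=1..Suc m. x i)) = conv_pmf (poisson_pmf s) (poisson_pmf (x (Suc m)))"
    using conv_poisson_pmf[OF s xm] by (simp add: s_def add.assoc)
  then have "dV (conv_pmf (poisson_pmf a) (bern_sum_pmf (\<lambda>i. 1 - exp (- x i)) (Suc m)))
            (poisson_pmf (a + (\<Sum>i=1..Suc m. x i)))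
      = dV (conv_pmf (conv_pmf (poisson_pmf a) (bern_sum_pmf (\<lambda>i. 1 - exp (- x i)) m))
                     (bernoulli_nat_pmf (1 - exp (- x (Suc m)))))
           (conv_pmf (poisson_pmf s) (poisson_pmf (x (Suc m))))"
    by (simp only: bern_sum_pmf_Suc_conv conv_pmf_assoc)
  also have "\<dots> \<le> dV (conv_pmf (poisson_pmf a) (bern_sum_pmf (\<lambda>i. 1 - exp (- x i)) m)) (poisson_pmf s)
       + dV (bernoulli_nat_pmf (1 - exp (- x (Suc m)))) (poisson_pmf (x (Suc m)))"
    by (rule dV_conv_pmf)
  also have "\<dots> \<le> 2 * (\<Sum>i=1..m. (x i)\<^sup>2) + 2 * (x (Suc m))\<^sup>2"
    using Suc dV_bernoulli_nat_poisson[OF xm] unfolding s_def by (intro add_mono) auto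
  finally show ?case by (simp add: algebra_simps)
qed simp

text \<open>Le Cam's inequality for Bernoulli sums with parameters \<open>1 - exp (- x i)\<close>; the extra Poisson
  mass \<open>a\<close> only serves to keep the Poisson rate positive.\<close>

lemma dV_bern_sum_poisson:
  assumes a: "0 < a" and x: "\<And>i. i \<in> {1..m} \<Longrightarrow> 0 < x i"
  shows "dV (bern_sum_pmf (\<lambda>i. 1 - exp (- x i)) m) (poisson_pmf (a + (\<Sum>i=1..m. x i)))
           \<le> 2 * a + 2 * (\<Sum>i=1..m. (x i)\<^sup>2)"
proof -
  define B where "B = bern_sum_pmf (\<lambda>i. 1 - exp (- x i)) m"
  have "dV B (conv_pmf (poisson_pmf a) B) \<le> 2 * a"
    using dV_conv_pmf_self[of B "poisson_pmf a"] one_minus_exp_neg_le[of a] a by simp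
  then show ?thesis
    using dV_triangle[of B "poisson_pmf (a + (\<Sum>i=1..m. x i))" "conv_pmf (poisson_pmf a) B"]
      dV_conv_bern_sum_poisson[of a m x, OF a x] unfolding B_def by linarith
qed

section \<open>Convergence in distribution from approximation in variational distance\<close>

lemma cdf_distr_pmf_nat:
  "cdf (distr (measure_pmf (P :: nat pmf)) borel real) x = (\<Sum>k<nat (\<lfloor>x\<rfloor> + 1). pmf P k)"
proof -
  have "real k \<le> x \<longleftrightarrow> k < nat (\<lfloor>x\<rfloor> + 1)" for k
    by (simp add: zless_nat_eq_int_zless le_floor_iff)
  then have "real -` {..x} = {..<nat (\<lfloor>x\<rfloor> + 1)}" by auto
  then show ?thesis
    unfolding cdf_def2 by (simp add: measure_distr measure_measure_pmf_finite)
qed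

lemma weak_conv_of_pmf_tendsto:
  assumes "\<And>k. (\<lambda>n. pmf (S n) k) \<longlonglongrightarrow> pmf F k"
  shows "weak_conv_m (\<lambda>n. distr (measure_pmf (S n)) borel real) (distr (measure_pmf F) borel real)"
  unfolding weak_conv_m_def weak_conv_def cdf_distr_pmf_nat
  using assms by (auto intro!: tendsto_sum)

lemma real_distribution_distr_pmf: "real_distribution (distr (measure_pmf (P :: nat pmf)) borel real)"
  unfolding real_distribution_def real_distribution_axioms_def
  by (auto intro!: prob_space.prob_space_distr measure_pmf.prob_space_axioms)

locale dV_approximable =
  fixes S :: "nat \<Rightarrow> nat pmf"
  assumes approx: "\<And>e. 0 < e \<Longrightarrow> \<exists>T. eventually (\<lambda>n. dV (S n) T \<le> e) sequentially"
begin

lemma convergent_pmf: "convergent (\<lambda>n. pmf (S n) k)"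
proof (rule Cauchy_convergent, rule metric_CauchyI)
  fix e :: real assume e: "0 < e"
  obtain T N where N: "\<And>n. n \<ge> N \<Longrightarrow> dV (S n) T \<le> e / 3"
    using approx[of "e / 3"] e unfolding eventually_sequentially by auto
  have "dist (pmf (S m) k) (pmf (S n) k) < e" if "m \<ge> N" "n \<ge> N" for m n
    using N[OF that(1)] N[OF that(2)] pmf_diff_le_dV[of "S m" k T] pmf_diff_le_dV[of "S n" k T] e
    by (simp add: dist_real_def)
  then show "\<exists>M. \<forall>m\<ge>M. \<forall>n\<ge>M. dist (pmf (S m) k) (pmf (S n) k) < e" by blast
qed

definition limit_pmf :: "nat \<Rightarrow> real" where
  "limit_pmf k = lim (\<lambda>n. pmf (S n) k)"

lemma pmf_tendsto_limit_pmf: "(\<lambda>n. pmf (S n) k) \<longlonglongrightarrow> limit_pmf k"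
  unfolding limit_pmf_def using convergent_pmf by (simp add: convergent_LIMSEQ_iff)

lemma limit_pmf_nonneg: "0 \<le> limit_pmf k"
  by (rule LIMSEQ_le_const[OF pmf_tendsto_limit_pmf]) auto

lemma sum_pmf_tendsto_limit_pmf: "(\<lambda>n. \<Sum>k<N. pmf (S n) k) \<longlonglongrightarrow> (\<Sum>k<N. limit_pmf k)"
  by (intro tendsto_sum pmf_tendsto_limit_pmf)

lemma summable_limit_pmf: "summable limit_pmf"
  by (rule summableI_nonneg_bounded[OF limit_pmf_nonneg])
     (rule LIMSEQ_le_const2[OF sum_pmf_tendsto_limit_pmf], auto intro: sum_pmf_nat_le_1)

text \<open>No mass escapes to infinity: the approximating distributions \<open>T\<close> are tight and the
  partial sums of \<open>S n\<close> stay within \<open>dV (S n) T\<close> of those of \<open>T\<close>.\<close>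

lemma suminf_limit_pmf: "(\<Sum>k. limit_pmf k) = 1"
proof (rule antisym)
  show "suminf limit_pmf \<le> 1"
    by (rule suminf_le_const[OF summable_limit_pmf], rule LIMSEQ_le_const2[OF sum_pmf_tendsto_limit_pmf])
       (auto intro: sum_pmf_nat_le_1)
  have lower: "1 - 2 * e \<le> suminf limit_pmf" if e: "0 < e" for e
  proof -
    obtain T M where M: "\<And>n. n \<ge> M \<Longrightarrow> dV (S n) T \<le> e"
      using approx[OF e] unfolding eventually_sequentially by auto
    have "(\<lambda>N. \<Sum>k<N. pmf T k) \<longlonglongrightarrow> 1"
      using summable_LIMSEQ[OF summable_pmf_nat[of T]] suminf_pmf_nat[of T] by simp
    then obtain N where N: "\<bar>(\<Sum>k<N. pmf T k) - 1\<bar> < e"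
      using e unfolding LIMSEQ_def dist_real_def by (metis order_refl)
    have "1 - 2 * e \<le> (\<Sum>k<N. pmf (S n) k)" if "n \<ge> M" for n
      using M[OF that] sum_pmf_diff_le_dV[of "{..<N}" "S n" T, OF finite_lessThan] N
      unfolding abs_le_iff abs_less_iff by linarith
    then have "1 - 2 * e \<le> (\<Sum>k<N. limit_pmf k)"
      by (intro LIMSEQ_le_const[OF sum_pmf_tendsto_limit_pmf]) blast
    also have "\<dots> \<le> suminf limit_pmf"
      by (rule sum_le_suminf[OF summable_limit_pmf]) (auto intro: limit_pmf_nonneg)
    finally show ?thesis .
  qed
  show "1 \<le> suminf limit_pmf"
  proof (rule field_le_epsilon)
    fix e :: real assume "0 < e"
    then show "1 \<le> suminf limit_pmf + e" using lower[of "e / 2"] by simp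
  qed
qed

lemma convergent_in_distribution:
  "\<exists>M. real_distribution M \<and> weak_conv_m (\<lambda>n. distr (measure_pmf (S n)) borel real) M"
proof -
  have "(\<integral>\<^sup>+k. limit_pmf k \<partial>count_space UNIV) = 1"
    unfolding nn_integral_count_space_nat
    using suminf_ennreal2[OF limit_pmf_nonneg summable_limit_pmf] suminf_limit_pmf by simp
  then have "pmf (embed_pmf limit_pmf) k = limit_pmf k" for k
    by (rule pmf_embed_pmf[OF limit_pmf_nonneg])
  then have "weak_conv_m (\<lambda>n. distr (measure_pmf (S n)) borel real)
      (distr (measure_pmf (embed_pmf limit_pmf)) borel real)"
    by (intro weak_conv_of_pmf_tendsto) (simp add: pmf_tendsto_limit_pmf)
  then show ?thesis using real_distribution_distr_pmf by blast
qed

end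

section \<open>Equilibria of the games \<open>G(n, c)\<close> as \<open>n\<close> grows\<close>

text \<open>At the equilibrium of \<open>G(n, c)\<close>, \<open>exp (- L n)\<close> is the probability that nobody transmits
  and \<open>ell i = - ln a\<^sub>i\<close> with \<open>a\<^sub>i = c i / (1 + c i)\<close>.\<close>

locale fmne_sequence =
  fixes c :: "nat \<Rightarrow> real" and p :: "nat \<Rightarrow> nat \<Rightarrow> real"
  assumes c_pos: "\<And>i. i \<ge> 1 \<Longrightarrow> 0 < c i"
    and fmne: "\<And>n. n \<ge> 2 \<Longrightarrow> FMNE c n (p n)"
begin

definition L :: "nat \<Rightarrow> real" where
  "L n = - (\<Sum>j=1..n. ln (1 - p n j))"

definition ell :: "nat \<Rightarrow> real" where
  "ell i = - ln (c i / (1 + c i))"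

lemma p_bounds:
  assumes "2 \<le> n" "i \<in> {1..n}"
  shows "0 < p n i" "p n i < 1"
  using fmne[OF assms(1)] assms(2) unfolding FMNE_def by auto

lemma ell_pos: "1 \<le> i \<Longrightarrow> 0 < ell i"
  using c_pos[of i] unfolding ell_def by (simp add: ln_less_zero_iff field_simps)

lemma ln_one_minus_p:
  assumes n: "2 \<le> n" and i: "i \<in> {1..n}"
  shows "ln (1 - p n i) = ell i - L n"
proof -
  have ci: "0 < c i" using i c_pos by simp
  have "ln (c i / (1 + c i)) = (\<Sum>j\<in>{1..n}-{i}. ln (1 - p n j))"
    unfolding FMNE_prod_one_minus[OF fmne[OF n] i ci, symmetric]
    using p_bounds(2)[OF n] by (subst ln_prod) (auto simp: less_le)
  moreover have "(\<Sum>j=1..n. ln (1 - p n j)) = ln (1 - p n i) + (\<Sum>j\<in>{1..n}-{i}. ln (1 - p n j))"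
    using i by (simp add: sum.remove)
  ultimately show ?thesis unfolding L_def ell_def by simp
qed

lemma ell_less_L: "2 \<le> n \<Longrightarrow> i \<in> {1..n} \<Longrightarrow> ell i < L n"
  using ln_one_minus_p[of n i] p_bounds[of n i] ln_less_zero[of "1 - p n i"] by simp

lemma L_eq_sum_ell: "2 \<le> n \<Longrightarrow> (real n - 1) * L n = (\<Sum>i=1..n. ell i)"
proof -
  assume n: "2 \<le> n"
  have "(\<Sum>i=1..n. L n - ell i) = (\<Sum>i=1..n. - ln (1 - p n i))"
    using ln_one_minus_p[OF n] by (intro sum.cong) auto
  also have "\<dots> = L n" unfolding L_def by (simp add: sum_negf)
  finally show ?thesis by (simp add: sum_subtractf algebra_simps)
qed

text \<open>Averaging \<open>ell\<close> over one more player with \<open>ell (Suc n) < L (Suc n)\<close> lowers \<open>L\<close>.\<close>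

lemma L_Suc_less:
  assumes n: "2 \<le> n"
  shows "L (Suc n) < L n"
proof -
  have "real n * L (Suc n) = (\<Sum>i=1..n. ell i) + ell (Suc n)"
    using L_eq_sum_ell[of "Suc n"] n by simp
  moreover have "ell (Suc n) < L (Suc n)" using ell_less_L[of "Suc n" "Suc n"] n by simp
  ultimately have "(real n - 1) * L (Suc n) < (real n - 1) * L n"
    using L_eq_sum_ell[OF n] by (simp add: algebra_simps)
  moreover have "0 < real n - 1" using n by simp
  ultimately show ?thesis by simp
qed

lemma L_antimono:
  assumes "2 \<le> n" "n \<le> m"
  shows "L m \<le> L n"
  using assms(2)
proof (induction m rule: dec_induct)
  case (step m)
  then show ?case using L_Suc_less[of m] assms(1) by simp
qed simp

lemma convergent_L: "convergent L"
proof -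
  have "decseq (\<lambda>k. L (k + 2))" unfolding decseq_def by (auto intro: L_antimono)
  moreover have "0 \<le> L (k + 2)" for k
    using ell_pos[of 1] ell_less_L[of "k + 2" 1] by simp
  ultimately have "convergent (\<lambda>k. L (k + 2))"
    using decseq_convergent[of "\<lambda>k. L (k + 2)" 0] unfolding convergent_def by blast
  then show ?thesis by (simp only: convergent_ignore_initial_segment)
qed

definition \<mu> :: real where
  "\<mu> = lim L"

lemma L_tendsto_mu: "L \<longlonglongrightarrow> \<mu>"
  unfolding \<mu>_def using convergent_L by (simp add: convergent_LIMSEQ_iff)

lemma mu_le_L: "2 \<le> n \<Longrightarrow> \<mu> \<le> L n"
  by (rule LIMSEQ_le_const2[OF L_tendsto_mu]) (auto intro!: exI[of _ n] L_antimono)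

lemma ell_le_mu: "1 \<le> i \<Longrightarrow> ell i \<le> \<mu>"
  by (rule LIMSEQ_le_const[OF L_tendsto_mu])
     (auto intro!: exI[of _ "i + 2"] less_imp_le[OF ell_less_L])

lemma mu_pos: "0 < \<mu>"
  using ell_pos[of 1] ell_le_mu[of 1] by simp

text \<open>\<open>y i\<close> is the part of player \<open>i\<close>'s intensity \<open>- ln (1 - p n i) = y i + \<delta> n\<close> that
  survives as \<open>n\<close> grows; \<open>\<delta> n\<close> is shared by all players.\<close>

definition y :: "nat \<Rightarrow> real" where
  "y i = (if 1 \<le> i then \<mu> - ell i else 0)"

definition \<delta> :: "nat \<Rightarrow> real" where
  "\<delta> n = L n - \<mu>"

lemma y_nonneg: "0 \<le> y i"
  unfolding y_def using ell_le_mu[of i] by simp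

lemma delta_nonneg: "2 \<le> n \<Longrightarrow> 0 \<le> \<delta> n"
  unfolding \<delta>_def using mu_le_L[of n] by simp

lemma delta_tendsto_0: "\<delta> \<longlonglongrightarrow> 0"
  unfolding \<delta>_def using tendsto_diff[OF L_tendsto_mu tendsto_const[of \<mu>]] by simp

lemma p_eq:
  assumes "2 \<le> n" "i \<in> {1..n}"
  shows "p n i = 1 - exp (- (y i + \<delta> n))"
proof -
  have "1 - p n i = exp (ln (1 - p n i))" using p_bounds[OF assms] by simp
  then show ?thesis using ln_one_minus_p[OF assms] assms(2) by (simp add: y_def \<delta>_def)
qed

lemma sum_y_eq: "2 \<le> n \<Longrightarrow> (\<Sum>i=1..n. y i) = L n - real n * \<delta> n"
  using L_eq_sum_ell[of n] unfolding y_def \<delta>_def by (simp add: sum_subtractf algebra_simps)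

lemma sum_y_le_mu: "(\<Sum>i=1..K. y i) \<le> \<mu>"
proof -
  have "(\<Sum>i=1..K. y i) \<le> (\<Sum>i=1..K+2. y i)" by (intro sum_mono2) (auto intro: y_nonneg)
  also have "\<dots> = \<mu> - (real K + 1) * \<delta> (K + 2)"
    using sum_y_eq[of "K + 2"] unfolding \<delta>_def by (simp add: algebra_simps)
  also have "\<dots> \<le> \<mu>" using delta_nonneg[of "K + 2"] by simp
  finally show ?thesis .
qed

lemma sum_y_lessThan_Suc: "(\<Sum>i<Suc n. y i) = (\<Sum>i=1..n. y i)"
proof -
  have "{..<Suc n} = insert 0 {1..n}" by auto
  then show ?thesis by (simp add: y_def)
qed

lemma summable_y: "summable y"
proof (rule summableI_nonneg_bounded[OF y_nonneg])
  fix n :: nat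
  have "(\<Sum>i<n. y i) \<le> (\<Sum>i<Suc n. y i)" by (simp add: y_nonneg)
  also have "\<dots> \<le> \<mu>" using sum_y_le_mu[of n] by (simp only: sum_y_lessThan_Suc)
  finally show "(\<Sum>i<n. y i) \<le> \<mu>" .
qed

lemma sum_y_tendsto: "(\<lambda>n. \<Sum>i=1..n. y i) \<longlonglongrightarrow> suminf y"
  using LIMSEQ_Suc[OF summable_LIMSEQ[OF summable_y]] by (simp only: sum_y_lessThan_Suc)

lemma n_delta_tendsto: "(\<lambda>n. real n * \<delta> n) \<longlonglongrightarrow> \<mu> - suminf y"
proof (rule Lim_transform_eventually)
  show "(\<lambda>n. L n - (\<Sum>i=1..n. y i)) \<longlonglongrightarrow> \<mu> - suminf y"
    by (intro tendsto_diff L_tendsto_mu sum_y_tendsto)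
  show "eventually (\<lambda>n. L n - (\<Sum>i=1..n. y i) = real n * \<delta> n) sequentially"
    using eventually_ge_at_top[of 2]
  proof eventually_elim
    case (elim n)
    then show ?case using sum_y_eq[OF elim] by simp
  qed
qed

lemma n_one_minus_exp_delta_tendsto: "(\<lambda>n. real n * (1 - exp (- \<delta> n))) \<longlonglongrightarrow> \<mu> - suminf y"
proof (rule tendsto_sandwich)
  show "eventually (\<lambda>n. real n * \<delta> n - real n * \<delta> n * \<delta> n \<le> real n * (1 - exp (- \<delta> n))) sequentially"
    using eventually_ge_at_top[of 2]
  proof eventually_elim
    case (elim n)
    have "real n * (\<delta> n - (\<delta> n)\<^sup>2) \<le> real n * (1 - exp (- \<delta> n))"
      using one_minus_exp_neg_ge[OF delta_nonneg[OF elim]] by (intro mult_left_mono) auto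
    then show ?case by (simp add: algebra_simps power2_eq_square)
  qed
  show "eventually (\<lambda>n. real n * (1 - exp (- \<delta> n)) \<le> real n * \<delta> n) sequentially"
    by (simp add: one_minus_exp_neg_le mult_left_mono)
  show "(\<lambda>n. real n * \<delta> n - real n * \<delta> n * \<delta> n) \<longlonglongrightarrow> \<mu> - suminf y"
    using tendsto_diff[OF n_delta_tendsto tendsto_mult[OF n_delta_tendsto delta_tendsto_0]] by simp
qed (rule n_delta_tendsto)

lemma prod_one_minus_p: "2 \<le> n \<Longrightarrow> (\<Prod>i=1..n. 1 - p n i) = exp (- L n)"
  using p_bounds[of n] unfolding L_def by (simp add: exp_sum exp_minus_inverse[symmetric] exp_minus)

lemma one_minus_exp_mu_le_sum_p:
  assumes n: "2 \<le> n"
  shows "1 - exp (- \<mu>) \<le> (\<Sum>i=1..n. p n i)"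
proof -
  have "1 - exp (- L n) \<le> (\<Sum>i=1..n. p n i)"
    unfolding prod_one_minus_p[OF n, symmetric] using p_bounds[OF n]
    by (intro one_minus_prod_le_sum) (auto intro: less_imp_le)
  moreover have "exp (- L n) \<le> exp (- \<mu>)" using mu_le_L[OF n] by simp
  ultimately show ?thesis by linarith
qed

lemma sum_p_tendsto: "\<exists>\<Lambda>>0. (\<lambda>n. \<Sum>i=1..n. p n i) \<longlonglongrightarrow> \<Lambda>"
proof -
  define g where "g i = 1 - exp (- y i)" for i
  define D where "D n = 1 - exp (- \<delta> n)" for n
  have "summable g"
    by (rule summable_comparison_test'[OF summable_y, of 0])
       (simp add: g_def y_nonneg one_minus_exp_neg_le)
  moreover have "g 0 = 0" by (simp add: g_def y_def)
  ultimately have g_tendsto: "(\<lambda>n. \<Sum>i=1..n. g i) \<longlonglongrightarrow> suminf g"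
    using LIMSEQ_Suc[OF summable_LIMSEQ, of g]
    by (simp add: lessThan_Suc_atMost atLeast0AtMost[symmetric] sum.atLeast_Suc_atMost[of 0])
  have D_tendsto: "D \<longlonglongrightarrow> 0"
    unfolding D_def using tendsto_diff[OF tendsto_const tendsto_exp[OF tendsto_minus[OF delta_tendsto_0]], of 1]
    by simp
  have nD_tendsto: "(\<lambda>n. real n * D n) \<longlonglongrightarrow> \<mu> - suminf y"
    unfolding D_def by (rule n_one_minus_exp_delta_tendsto)
  have "(\<lambda>n. (\<Sum>i=1..n. g i) + real n * D n - D n * (\<Sum>i=1..n. g i))
      \<longlonglongrightarrow> suminf g + (\<mu> - suminf y) - 0 * suminf g"
    by (intro tendsto_diff tendsto_add tendsto_mult g_tendsto nD_tendsto D_tendsto)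
  moreover have "eventually (\<lambda>n. (\<Sum>i=1..n. g i) + real n * D n - D n * (\<Sum>i=1..n. g i)
      = (\<Sum>i=1..n. p n i)) sequentially"
    using eventually_ge_at_top[of 2]
  proof eventually_elim
    case (elim n)
    have "(\<Sum>i=1..n. p n i) = (\<Sum>i=1..n. g i + D n - D n * g i)"
      using p_eq[OF elim] by (intro sum.cong) (auto simp: g_def D_def exp_add[symmetric] algebra_simps)
    then show ?case by (simp add: sum.distrib sum_subtractf sum_distrib_left)
  qed
  ultimately have lim: "(\<lambda>n. \<Sum>i=1..n. p n i) \<longlonglongrightarrow> suminf g + (\<mu> - suminf y)"
    by (simp add: Lim_transform_eventually)
  have "1 - exp (- \<mu>) \<le> suminf g + (\<mu> - suminf y)"
    by (intro LIMSEQ_le_const[OF lim]) (blast intro: one_minus_exp_mu_le_sum_p)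
  moreover have "0 < 1 - exp (- \<mu>)" using mu_pos by simp
  ultimately have "0 < suminf g + (\<mu> - suminf y)" by linarith
  then show ?thesis using lim by blast
qed

lemma dV_bern_sum_head:
  assumes n: "2 \<le> n" "K \<le> n"
  shows "dV (bern_sum_pmf (p n) K) (bern_sum_pmf (\<lambda>i. 1 - exp (- y i)) K) \<le> 2 * (real K * \<delta> n)"
proof -
  have "dV (bern_sum_pmf (p n) K) (bern_sum_pmf (\<lambda>i. 1 - exp (- y i)) K)
      \<le> 2 * (\<Sum>i=1..K. \<bar>p n i - (1 - exp (- y i))\<bar>)"
    using p_bounds[OF n(1)] n(2) by (intro dV_bern_sum_pmf) (auto simp: y_nonneg intro: less_imp_le)
  also have "(\<Sum>i=1..K. \<bar>p n i - (1 - exp (- y i))\<bar>) \<le> (\<Sum>i=1..K. \<delta> n)"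
  proof (rule sum_mono)
    fix i assume i: "i \<in> {1..K}"
    have "p n i - (1 - exp (- y i)) = exp (- y i) * (1 - exp (- \<delta> n))"
      using p_eq[OF n(1), of i] i n(2) by (simp add: exp_add[symmetric] algebra_simps)
    moreover have "exp (- y i) * (1 - exp (- \<delta> n)) \<le> 1 * (1 - exp (- \<delta> n))"
      using y_nonneg[of i] delta_nonneg[OF n(1)] by (intro mult_right_mono) auto
    ultimately show "\<bar>p n i - (1 - exp (- y i))\<bar> \<le> \<delta> n"
      using delta_nonneg[OF n(1)] one_minus_exp_neg_le[of "\<delta> n"] by simp
  qed
  finally show ?thesis by simp
qed

lemma sum_tail_intensity:
  assumes "2 \<le> n" "K \<le> n"
  shows "(\<Sum>i=1..n-K. y (K + i) + \<delta> n) = L n - (\<Sum>i=1..K. y i) - real K * \<delta> n"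
proof -
  have "L n - real n * \<delta> n = (\<Sum>i=1..K. y i) + (\<Sum>i=1..n-K. y (K + i))"
    unfolding sum_y_eq[OF assms(1), symmetric] by (rule sum_atLeast1_split[OF assms(2)])
  then show ?thesis using assms(2) by (simp add: sum.distrib of_nat_diff algebra_simps)
qed

lemma dV_bern_sum_tail:
  assumes n: "K + 2 \<le> n" and a: "0 < a" and \<eta>: "\<And>j. K < j \<Longrightarrow> y j \<le> \<eta>"
  shows "dV (bern_sum_pmf (\<lambda>i. p n (K + i)) (n - K)) (poisson_pmf (\<mu> - (\<Sum>i=1..K. y i) + a))
           \<le> 2 * a + 2 * (\<eta> + \<delta> n) * L n + 2 * (real K + 1) * \<delta> n"
proof -
  have n2: "2 \<le> n" and Kn: "K \<le> n" using n by auto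
  have \<delta>: "0 \<le> \<delta> n" by (rule delta_nonneg[OF n2])
  define x where "x i = y (K + i) + \<delta> n" for i
  have x_pos: "0 < x i" if "i \<in> {1..n-K}" for i
  proof -
    have "K + i \<in> {1..n}" using that Kn by auto
    from p_bounds(1)[OF n2 this] p_eq[OF n2 this] show ?thesis unfolding x_def by simp
  qed
  have x_le: "x i \<le> \<eta> + \<delta> n" if "i \<in> {1..n-K}" for i
    using \<eta>[of "K + i"] that unfolding x_def by simp
  have tail: "bern_sum_pmf (\<lambda>i. p n (K + i)) (n - K) = bern_sum_pmf (\<lambda>i. 1 - exp (- x i)) (n - K)"
    by (intro bern_sum_pmf_cong) (auto simp: x_def p_eq[OF n2])
  define s where "s = (\<Sum>i=1..n-K. x i)"
  have s_eq: "s = L n - (\<Sum>i=1..K. y i) - real K * \<delta> n"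
    unfolding s_def x_def by (rule sum_tail_intensity[OF n2 Kn])
  have "0 \<le> (\<Sum>i=1..K. y i)" "0 \<le> real K * \<delta> n" using \<delta> by (simp_all add: sum_nonneg y_nonneg)
  then have s_le: "s \<le> L n" using s_eq by linarith
  have s_nonneg: "0 \<le> s" unfolding s_def using x_pos by (intro sum_nonneg) (auto intro: less_imp_le)
  have "(\<Sum>i=1..n-K. (x i)\<^sup>2) \<le> (\<Sum>i=1..n-K. (\<eta> + \<delta> n) * x i)"
    using x_pos x_le by (intro sum_mono) (simp add: power2_eq_square mult_right_mono)
  also have "\<dots> \<le> (\<eta> + \<delta> n) * L n"
    unfolding sum_distrib_left[symmetric] s_def[symmetric]
    using s_le \<delta> \<eta>[of "Suc K"] y_nonneg[of "Suc K"] by (intro mult_left_mono) auto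
  finally have "dV (bern_sum_pmf (\<lambda>i. p n (K + i)) (n - K)) (poisson_pmf (a + s))
      \<le> 2 * a + 2 * ((\<eta> + \<delta> n) * L n)"
    using dV_bern_sum_poisson[of a "n - K" x, OF a x_pos] unfolding tail s_def by linarith
  moreover have "dV (poisson_pmf (a + s)) (poisson_pmf (\<mu> - (\<Sum>i=1..K. y i) + a))
      \<le> 2 * ((real K + 1) * \<delta> n)"
  proof -
    have "dV (poisson_pmf (a + s)) (poisson_pmf (\<mu> - (\<Sum>i=1..K. y i) + a))
        \<le> 2 * \<bar>(a + s) - (\<mu> - (\<Sum>i=1..K. y i) + a)\<bar>"
      using a s_nonneg sum_y_le_mu[of K] by (intro dV_poisson) auto
    also have "(a + s) - (\<mu> - (\<Sum>i=1..K. y i) + a) = \<delta> n - real K * \<delta> n"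
      unfolding s_eq \<delta>_def by simp
    also have "\<bar>\<delta> n - real K * \<delta> n\<bar> \<le> (real K + 1) * \<delta> n"
      using \<delta> by (simp add: abs_le_iff algebra_simps)
    finally show ?thesis by simp
  qed
  ultimately show ?thesis
    using dV_triangle[of "bern_sum_pmf (\<lambda>i. p n (K + i)) (n - K)"
        "poisson_pmf (\<mu> - (\<Sum>i=1..K. y i) + a)" "poisson_pmf (a + s)"]
    by (simp add: algebra_simps)
qed

lemma dV_bern_sum_approx:
  assumes n: "K + 2 \<le> n" and a: "0 < a" and \<eta>: "\<And>j. K < j \<Longrightarrow> y j \<le> \<eta>"
  shows "dV (bern_sum_pmf (p n) n)
           (conv_pmf (poisson_pmf (\<mu> - (\<Sum>i=1..K. y i) + a)) (bern_sum_pmf (\<lambda>i. 1 - exp (- y i)) K))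
         \<le> 2 * a + 2 * (\<eta> + \<delta> n) * L n + 2 * (2 * real K + 1) * \<delta> n"
proof -
  have "dV (bern_sum_pmf (p n) n)
           (conv_pmf (poisson_pmf (\<mu> - (\<Sum>i=1..K. y i) + a)) (bern_sum_pmf (\<lambda>i. 1 - exp (- y i)) K))
      \<le> dV (bern_sum_pmf (p n) K) (bern_sum_pmf (\<lambda>i. 1 - exp (- y i)) K)
        + dV (bern_sum_pmf (\<lambda>i. p n (K + i)) (n - K)) (poisson_pmf (\<mu> - (\<Sum>i=1..K. y i) + a))"
    using n by (simp add: bern_sum_pmf_split[of K n] conv_pmf_commute[of "poisson_pmf _"] dV_conv_pmf)
  then show ?thesis
    using dV_bern_sum_head[of n K] dV_bern_sum_tail[OF n a \<eta>] n by (simp add: algebra_simps)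
qed

lemma poisson_bernoulli_approximation:
  assumes \<epsilon>: "0 < \<epsilon>"
  shows "\<exists>lam>0. \<exists>K q. (\<forall>k\<in>{1..K}. 0 \<le> q k \<and> q k \<le> 1) \<and>
     eventually (\<lambda>n. dV (bern_sum_pmf (p n) n) (conv_pmf (poisson_pmf lam) (bern_sum_pmf q K)) \<le> \<epsilon>)
       sequentially"
proof -
  define a where "a = \<epsilon> / 8"
  define \<eta> where "\<eta> = \<epsilon> / (8 * (\<mu> + 1))"
  have a: "0 < a" and "0 < \<eta>" unfolding a_def \<eta>_def using \<epsilon> mu_pos by auto
  then obtain K where K: "\<And>j. K \<le> j \<Longrightarrow> y j < \<eta>"
    using order_tendstoD(2)[OF summable_LIMSEQ_zero[OF summable_y]]
    unfolding eventually_sequentially by blast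
  have y_small: "y j \<le> \<eta>" if "K < j" for j using K[of j] that by linarith
  define lam where "lam = \<mu> - (\<Sum>i=1..K. y i) + a"
  have "0 < lam" unfolding lam_def using sum_y_le_mu[of K] a by simp
  have "\<eta> * \<mu> \<le> \<epsilon> / 8"
    unfolding \<eta>_def using \<epsilon> mu_pos by (simp add: field_simps)
  then have limit_small: "2 * a + 2 * (\<eta> + 0) * \<mu> + 2 * (2 * real K + 1) * 0 < \<epsilon>"
    using \<epsilon> unfolding a_def by simp
  have "(\<lambda>n. 2 * a + 2 * (\<eta> + \<delta> n) * L n + 2 * (2 * real K + 1) * \<delta> n)
      \<longlonglongrightarrow> 2 * a + 2 * (\<eta> + 0) * \<mu> + 2 * (2 * real K + 1) * 0"
    by (intro tendsto_intros delta_tendsto_0 L_tendsto_mu)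
  from order_tendstoD(2)[OF this limit_small]
  have "eventually (\<lambda>n. 2 * a + 2 * (\<eta> + \<delta> n) * L n + 2 * (2 * real K + 1) * \<delta> n < \<epsilon>)
      sequentially" .
  then have "eventually (\<lambda>n. dV (bern_sum_pmf (p n) n)
      (conv_pmf (poisson_pmf lam) (bern_sum_pmf (\<lambda>i. 1 - exp (- y i)) K)) \<le> \<epsilon>) sequentially"
    using eventually_ge_at_top[of "K + 2"]
  proof eventually_elim
    case (elim n)
    show ?case
      using dV_bern_sum_approx[OF elim(2) a y_small] elim(1) unfolding lam_def by linarith
  qed
  moreover have "0 \<le> 1 - exp (- y i) \<and> 1 - exp (- y i) \<le> 1" for i
    using y_nonneg[of i] by simp
  ultimately show ?thesis
    using \<open>0 < lam\<close> by (intro exI[of _ lam] conjI exI[of _ K] exI[of _ "\<lambda>i. 1 - exp (- y i)"]) auto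
qed

end

theorem theorem2:
  fixes c :: "nat \<Rightarrow> real" and p :: "nat \<Rightarrow> nat \<Rightarrow> real"
  assumes c_pos: "\<And>i. i \<ge> 1 \<Longrightarrow> 0 < c i"
    and fmne: "\<And>n. n \<ge> 2 \<Longrightarrow> FMNE c n (p n)"
  shows "((\<exists>M. real_distribution M \<and>
            weak_conv_m (\<lambda>n. distr (measure_pmf (bern_sum_pmf (p n) n)) borel real) M)
         \<longleftrightarrow> (\<exists>L>0. (\<lambda>n. \<Sum>i=1..n. p n i) \<longlonglongrightarrow> L)) \<and>
         (\<forall>\<epsilon>>0.
          \<exists>lam>0. \<exists>K q. (\<forall>k\<in>{1..K}. 0 \<le> q k \<and> q k \<le> 1) \<and>
            limsup (\<lambda>n. ereal (dV (bern_sum_pmf (p n) n)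
                                 (conv_pmf (poisson_pmf lam) (bern_sum_pmf q K)))) \<le> ereal \<epsilon>)"
proof -
  interpret fmne_sequence c p
    using c_pos fmne by unfold_locales
  interpret dV_approximable "\<lambda>n. bern_sum_pmf (p n) n"
    by unfold_locales (use poisson_bernoulli_approximation in blast)
  have "limsup (\<lambda>n. ereal (dV (bern_sum_pmf (p n) n) T)) \<le> ereal \<epsilon>"
    if "eventually (\<lambda>n. dV (bern_sum_pmf (p n) n) T \<le> \<epsilon>) sequentially" for T \<epsilon>
    using that by (intro Limsup_bounded) (auto elim: eventually_mono)
  then have "\<exists>lam>0. \<exists>K q. (\<forall>k\<in>{1..K}. 0 \<le> q k \<and> q k \<le> 1) \<and>
      limsup (\<lambda>n. ereal (dV (bern_sum_pmf (p n) n) (conv_pmf (poisson_pmf lam) (bern_sum_pmf q K))))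
        \<le> ereal \<epsilon>" if "0 < \<epsilon>" for \<epsilon>
    using poisson_bernoulli_approximation[OF that] by meson
  then show ?thesis
    using convergent_in_distribution sum_p_tendsto by blast
qed

end
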